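(* In a naturally labeled rooted tree with vertex set $\{0,\dots,n\}$, for each $d\ge0$ the set of labels of vertices at distance $d$ from the root forms an interval of consecutive integers in $\{0,\dots,n\}$.
   Context: A rooted tree with vertex set $\{0,\dots,n\}$ is naturally labeled if labels increase towards the root (each vertex has a smaller label than its parent) and, for each $i$, all children of $i$ have labels smaller than all children of $i+1$. *)

theory Defs
  imports Main
begin

text \<open>A rooted tree on the vertex set {0..n} whose labels increase towards the root
  is encoded by its parent function p: every non-root vertex i < n has parent p i
  with i < p i \<le> n (the root is necessarily n; the value p n is irrelevant).\<close>

definition naturally_labeled :: "nat \<Rightarrow> (nat \<Rightarrow> nat) \<Rightarrow> bool" where
  "naturally_labeled n p \<longleftrightarrow>
     (\<forall>i<n. i < p i \<and> p i \<le> n) \<and>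
     (\<forall>j<n. \<forall>k<n. p j < p k \<longrightarrow> j < k)"

definition dist_root :: "nat \<Rightarrow> (nat \<Rightarrow> nat) \<Rightarrow> nat \<Rightarrow> nat \<Rightarrow> bool" where
  "dist_root n p i d \<longleftrightarrow> (p ^^ d) i = n \<and> (\<forall>e<d. (p ^^ e) i \<noteq> n)"

end

theory Submission
  imports Defs
begin

text \<open>Write depth i for the least number of parent steps leading from i to the root n.
  Natural labeling makes the parent map monotone on the non-root vertices, so by induction
  along parent paths depth is antitone in the label. Hence each level set of depth is
  order-convex in {0..n}, i.e. an interval.\<close>

lemma naturally_labeled_parent:
  assumes "naturally_labeled n p" and "i < n"
  shows "i < p i" and "p i \<le> n"
  using assms unfolding naturally_labeled_def by auto

lemma naturally_labeled_parent_mono: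
  assumes "naturally_labeled n p" and "i \<le> j" and "j < n"
  shows "p i \<le> p j"
  using assms unfolding naturally_labeled_def by (meson leD le_less_trans not_le_imp_less)

lemma naturally_labeled_reaches_root:
  assumes nl: "naturally_labeled n p" and "i \<le> n"
  shows "\<exists>d. (p ^^ d) i = n"
  using \<open>i \<le> n\<close>
proof (induction "n - i" arbitrary: i rule: less_induct)
  case less
  show ?case
  proof (cases "i = n")
    case True
    then show ?thesis by (metis funpow_0)
  next
    case False
    with less.prems have "i < n" by simp
    note parent = naturally_labeled_parent[OF nl this]
    then have "n - p i < n - i" by simp
    with parent obtain d where "(p ^^ d) (p i) = n"
      using less.hyps[of "p i"] by blast
    then have "(p ^^ Suc d) i = n"
      by (simp only: funpow_Suc_right o_apply)
    then show ?thesis ..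
  qed
qed

definition depth :: "nat \<Rightarrow> (nat \<Rightarrow> nat) \<Rightarrow> nat \<Rightarrow> nat" where
  "depth n p i = (LEAST d. (p ^^ d) i = n)"

lemma dist_root_iff_depth:
  assumes nl: "naturally_labeled n p" and "i \<le> n"
  shows "dist_root n p i d \<longleftrightarrow> d = depth n p i"
proof -
  have reach: "(p ^^ depth n p i) i = n"
    unfolding depth_def using naturally_labeled_reaches_root[OF assms] by (rule LeastI_ex)
  have below: "(p ^^ e) i \<noteq> n" if "e < depth n p i" for e
    using that unfolding depth_def by (rule not_less_Least)
  show ?thesis
    unfolding dist_root_def using reach below by (metis linorder_neqE_nat)
qed

lemma depth_root: "depth n p n = 0"
  unfolding depth_def by simp

lemma depth_parent:
  assumes nl: "naturally_labeled n p" and "i < n"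
  shows "depth n p i = Suc (depth n p (p i))"
proof -
  note parent = naturally_labeled_parent[OF assms]
  let ?d = "depth n p (p i)"
  have "dist_root n p (p i) ?d"
    using dist_root_iff_depth[OF nl parent(2)] by simp
  then have reach: "(p ^^ ?d) (p i) = n" and below: "\<forall>e<?d. (p ^^ e) (p i) \<noteq> n"
    unfolding dist_root_def by auto
  have "dist_root n p i (Suc ?d)"
    unfolding dist_root_def
  proof (intro conjI allI impI)
    show "(p ^^ Suc ?d) i = n"
      using reach by (simp only: funpow_Suc_right o_apply)
    fix e assume "e < Suc ?d"
    then show "(p ^^ e) i \<noteq> n"
      using \<open>i < n\<close> below by (cases e) (simp_all only: funpow_Suc_right o_apply, auto)
  qed
  then show ?thesis
    using dist_root_iff_depth[OF nl] \<open>i < n\<close> by simp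
qed

lemma depth_antimono:
  assumes nl: "naturally_labeled n p" and "i \<le> j" and "j \<le> n"
  shows "depth n p j \<le> depth n p i"
  using assms(2,3)
proof (induction "n - i" arbitrary: i j rule: less_induct)
  case less
  consider "j = n" | "i = j" | "i < j" "j < n"
    using less.prems by linarith
  then show ?case
  proof cases
    case 3
    have "p i \<le> p j"
      using naturally_labeled_parent_mono[OF nl] 3 by simp
    moreover have "i < p i" "p j \<le> n"
      using naturally_labeled_parent[OF nl] 3 by auto
    ultimately have "depth n p (p j) \<le> depth n p (p i)"
      using less.hyps by simp
    then show ?thesis
      using depth_parent[OF nl] 3 by simp
  qed (simp_all add: depth_root)
qed

lemma finite_order_convex_nat_set_is_interval:
  fixes S :: "nat set"
  assumes "finite S" and convex: "\<And>a b k. a \<in> S \<Longrightarrow> b \<in> S \<Longrightarrow> a \<le> k \<Longrightarrow> k \<le> b \<Longrightarrow> k \<in> S"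
  shows "\<exists>a b. S = {a..b}"
proof (cases "S = {}")
  case True
  then have "S = {1..0}" by simp
  then show ?thesis by blast
next
  case False
  have "Min S \<in> S" "Max S \<in> S"
    using \<open>finite S\<close> False by simp_all
  then have "k \<in> S \<longleftrightarrow> k \<in> {Min S..Max S}" for k
    using \<open>finite S\<close> convex[of "Min S" "Max S" k] by auto
  then have "S = {Min S..Max S}" by blast
  then show ?thesis by blast
qed

theorem lemma3p7:
  fixes n d :: nat and p :: "nat \<Rightarrow> nat"
  assumes "naturally_labeled n p"
  shows "\<exists>a b. {i. i \<le> n \<and> dist_root n p i d} = {a..b}"
proof -
  have level: "{i. i \<le> n \<and> dist_root n p i d} = {i. i \<le> n \<and> depth n p i = d}"
    using dist_root_iff_depth[OF assms] by auto
  have "\<exists>a b. {i. i \<le> n \<and> depth n p i = d} = {a..b}"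
  proof (rule finite_order_convex_nat_set_is_interval)
    fix a b k
    assume "a \<in> {i. i \<le> n \<and> depth n p i = d}" "b \<in> {i. i \<le> n \<and> depth n p i = d}"
      and "a \<le> k" "k \<le> b"
    then show "k \<in> {i. i \<le> n \<and> depth n p i = d}"
      using depth_antimono[OF assms, of a k] depth_antimono[OF assms, of k b] by auto
  qed simp
  then show ?thesis
    unfolding level .
qed

end
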